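(* Let $m,n,p,q,s,t$ be arbitrary integers, let $A(x_1,x_2)=\begin{bmatrix}sx_1 & x_2\\ mx_1+nx_2 & -sx_1\end{bmatrix}$, and let $$P(x_1,x_2,x_3,x_4)=\begin{bmatrix}tA(x_1,x_2) & A(x_3,x_4)\\ pA(x_1,x_2)+qA(x_3,x_4) & -tA(x_1,x_2)\end{bmatrix}.$$ Then there exist trilinear forms $w_1,\dots,w_4$ in independent variables $x_1,\dots,x_4,y_1,\dots,y_4,z_1,\dots,z_4$, with coefficients integer polynomials in $m,n,p,q,s,t$, such that $P(x)P(y)P(z)=P(w)$. Consequently the quaternary quartic form $f=\det P$ satisfies $f(x_1,\dots,x_4)f(y_1,\dots,y_4)f(z_1,\dots,z_4)=f(w_1,\dots,w_4)$ identically. *)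

theory Defs
  imports "Jordan_Normal_Form.Determinant"
begin

inductive_set int_poly_fun :: "nat \<Rightarrow> ((nat \<Rightarrow> int) \<Rightarrow> int) set" for N :: nat where
  const: "(\<lambda>v. c) \<in> int_poly_fun N"
| var: "i < N \<Longrightarrow> (\<lambda>v. v i) \<in> int_poly_fun N"
| add: "f \<in> int_poly_fun N \<Longrightarrow> g \<in> int_poly_fun N \<Longrightarrow> (\<lambda>v. f v + g v) \<in> int_poly_fun N"
| mult: "f \<in> int_poly_fun N \<Longrightarrow> g \<in> int_poly_fun N \<Longrightarrow> (\<lambda>v. f v * g v) \<in> int_poly_fun N"

definition Amat :: "int \<Rightarrow> int \<Rightarrow> int \<Rightarrow> int \<Rightarrow> int \<Rightarrow> int mat" where
  "Amat m n s x1 x2 = mat 2 2 (\<lambda>(i,j).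
      if i = 0 \<and> j = 0 then s * x1
      else if i = 0 then x2
      else if j = 0 then m * x1 + n * x2
      else - (s * x1))"

text \<open>P(x1,..,x4); the variables x_1..x_4 are x 0..x 3.\<close>
definition Pmat :: "int \<Rightarrow> int \<Rightarrow> int \<Rightarrow> int \<Rightarrow> int \<Rightarrow> int \<Rightarrow> (nat \<Rightarrow> int) \<Rightarrow> int mat" where
  "Pmat m n p q s t x =
     (let A1 = Amat m n s (x 0) (x 1); A2 = Amat m n s (x 2) (x 3) in
      four_block_mat (t \<cdot>\<^sub>m A1) A2 (p \<cdot>\<^sub>m A1 + q \<cdot>\<^sub>m A2) ((- t) \<cdot>\<^sub>m A1))"

definition trilin :: "(nat \<Rightarrow> nat \<Rightarrow> nat \<Rightarrow> int) \<Rightarrow> (nat \<Rightarrow> int) \<Rightarrow> (nat \<Rightarrow> int) \<Rightarrow> (nat \<Rightarrow> int) \<Rightarrow> int" where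
  "trilin c x y z = (\<Sum>i<4. \<Sum>j<4. \<Sum>l<4. c i j l * x i * y j * z l)"

end

theory Submission
  imports Defs
begin

text \<open>The \<open>A\<close>-matrices form a two-dimensional space closed under triple products. In the
  \<open>2 \<times> 2\<close> block form of \<open>P\<close>, every block of \<open>P(x) P(y) P(z)\<close> is a sum of triple products of
  \<open>A\<close>-matrices, hence an \<open>A\<close>-matrix, and the four blocks again have the shape of some \<open>P(w)\<close>,
  with \<open>w\<close> trilinear and its coefficients integer polynomials in the parameters. The identity for
  \<open>f = det P\<close> then follows from multiplicativity of \<open>det\<close>.\<close>

lemma int_poly_fun_uminus: "f \<in> int_poly_fun N \<Longrightarrow> (\<lambda>v. - f v) \<in> int_poly_fun N"
  using int_poly_fun.mult[OF int_poly_fun.const[where c = "-1"]] by simp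

lemma int_poly_fun_diff:
  "f \<in> int_poly_fun N \<Longrightarrow> g \<in> int_poly_fun N \<Longrightarrow> (\<lambda>v. f v - g v) \<in> int_poly_fun N"
  using int_poly_fun.add[OF _ int_poly_fun_uminus] by simp

lemma sum_lessThan_4: "(\<Sum>i<4::nat. f i) = f 0 + f 1 + f 2 + (f 3 :: 'a::comm_monoid_add)"
  by (simp add: eval_nat_numeral)

lemma mult_mat_mat:
  "mat n n f * mat n n g = mat n n (\<lambda>(i,j). \<Sum>k<n. f (i,k) * g (k,j) :: 'a::semiring_0)"
  by (rule eq_matI) (auto simp: scalar_prod_def lessThan_atLeast0)

text \<open>Since \<open>A(u) A(v) = \<beta>(u,v) I + \<delta>(u,v) K\<close> with \<open>K = [[0, s], [-n s, m]]\<close>, and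
  \<open>K A(w) = A(m w\<^sub>1 + n w\<^sub>2, -s\<^sup>2 w\<^sub>1)\<close>, the triple product of \<open>A\<close>-matrices is again an
  \<open>A\<close>-matrix, with coordinates:\<close>
definition Amat_triple :: "int \<Rightarrow> int \<Rightarrow> int \<Rightarrow> int \<times> int \<Rightarrow> int \<times> int \<Rightarrow> int \<times> int \<Rightarrow> int \<times> int" where
  "Amat_triple m n s = (\<lambda>(u1, u2) (v1, v2) (w1, w2).
     let \<beta> = s\<^sup>2 * u1 * v1 + m * u2 * v1 + n * u2 * v2; \<delta> = u1 * v2 - u2 * v1
     in (\<beta> * w1 + \<delta> * (m * w1 + n * w2), \<beta> * w2 - \<delta> * s\<^sup>2 * w1))"

text \<open>\<open>W\<^sub>u\<close> and \<open>W\<^sub>v\<close> are read off from the top blocks \<open>t A(W\<^sub>u)\<close> and \<open>A(W\<^sub>v)\<close> of the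
  block product \<open>P(x) P(y) P(z)\<close>.\<close>
definition Pmat_triple ::
  "int \<Rightarrow> int \<Rightarrow> int \<Rightarrow> int \<Rightarrow> int \<Rightarrow> int \<Rightarrow> (nat \<Rightarrow> int) \<Rightarrow> (nat \<Rightarrow> int) \<Rightarrow> (nat \<Rightarrow> int) \<Rightarrow> nat \<Rightarrow> int"
where
  "Pmat_triple m n p q s t x y z =
     (let T = Amat_triple m n s;
          u = (x 0, x 1); v = (x 2, x 3); u' = (y 0, y 1); v' = (y 2, y 3); u'' = (z 0, z 1); v'' = (z 2, z 3);
          W\<^sub>u = (\<lambda>\<pi>. t\<^sup>2 * \<pi> (T u u' u'') + q * \<pi> (T v v' u'') + p * \<pi> (T u v' u'')
                    + q * \<pi> (T u v' v'') - q * \<pi> (T v u' v''));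
          W\<^sub>v = (\<lambda>\<pi>. t\<^sup>2 * \<pi> (T u u' v'') + p * \<pi> (T v u' v'') + q * \<pi> (T v v' v'')
                    - t\<^sup>2 * \<pi> (T u v' u'') + t\<^sup>2 * \<pi> (T v u' u''))
      in (\<lambda>k. [W\<^sub>u fst, W\<^sub>u snd, W\<^sub>v fst, W\<^sub>v snd] ! k))"

lemma Pmat_eq_mat:
  "Pmat m n p q s t x = mat 4 4 (\<lambda>(i,j).
     [[t * s * x 0, t * x 1, s * x 2, x 3],
      [t * (m * x 0 + n * x 1), - (t * s * x 0), m * x 2 + n * x 3, - (s * x 2)],
      [p * s * x 0 + q * s * x 2, p * x 1 + q * x 3, - (t * s * x 0), - (t * x 1)],
      [p * (m * x 0 + n * x 1) + q * (m * x 2 + n * x 3), - (p * s * x 0 + q * s * x 2),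
       - (t * (m * x 0 + n * x 1)), t * s * x 0]] ! i ! j)"
proof (rule eq_matI, goal_cases)
  case (1 i j)
  then have "i \<in> {0,1,2,3}" "j \<in> {0,1,2,3}" by auto
  then show ?case
    by (auto simp: Pmat_def Amat_def Let_def four_block_mat_def algebra_simps)
qed (auto simp: Pmat_def Amat_def Let_def)

lemma Pmat_triple_product:
  "Pmat m n p q s t x * Pmat m n p q s t y * Pmat m n p q s t z
   = Pmat m n p q s t (Pmat_triple m n p q s t x y z)"
  unfolding Pmat_eq_mat mult_mat_mat
proof (rule eq_matI, goal_cases)
  case (1 i j)
  then have "i \<in> {0,1,2,3}" "j \<in> {0,1,2,3}" by auto
  then show ?case
    by (auto simp: sum_lessThan_4 Pmat_triple_def Amat_triple_def Let_def power2_eq_square)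
      (simp_all add: algebra_simps)
qed auto

lemma trilin_Pmat_triple_coeffs:
  assumes "k < 4"
  shows "trilin (\<lambda>i j l. Pmat_triple m n p q s t
           (\<lambda>a. of_bool (a = i)) (\<lambda>a. of_bool (a = j)) (\<lambda>a. of_bool (a = l)) k) x y z
         = Pmat_triple m n p q s t x y z k"
proof -
  from assms have "k \<in> {0,1,2,3}" by auto
  then show ?thesis
    unfolding trilin_def sum_lessThan_4
    by (auto simp: Pmat_triple_def Amat_triple_def Let_def) (simp_all add: algebra_simps power2_eq_square)
qed

lemma Pmat_triple_coeff_poly:
  assumes "k < 4"
  shows "(\<lambda>v. Pmat_triple (v 0) (v 1) (v 2) (v 3) (v 4) (v 5) x y z k) \<in> int_poly_fun 6"
proof -
  from assms have "k \<in> {0,1,2,3}" by auto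
  then show ?thesis
    by (auto simp only: Pmat_triple_def Amat_triple_def Let_def prod.case power2_eq_square
          insert_iff empty_iff nth_Cons_0 nth_Cons_Suc numeral_2_eq_2 numeral_3_eq_3 One_nat_def)
      (intro int_poly_fun.add int_poly_fun.mult int_poly_fun_diff int_poly_fun.const int_poly_fun.var; simp)+
qed

lemma Pmat_cong: "(\<And>k. k < 4 \<Longrightarrow> x k = x' k) \<Longrightarrow> Pmat m n p q s t x = Pmat m n p q s t x'"
  by (simp add: Pmat_def)

lemma det_Pmat_triple_product:
  "det (Pmat m n p q s t x) * det (Pmat m n p q s t y) * det (Pmat m n p q s t z)
   = det (Pmat m n p q s t (Pmat_triple m n p q s t x y z))"
proof -
  have carrier: "Pmat m n p q s t x \<in> carrier_mat 4 4" for x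
    by (simp add: Pmat_eq_mat)
  show ?thesis
    unfolding Pmat_triple_product[symmetric] det_mult[OF mult_carrier_mat[OF carrier carrier] carrier]
      det_mult[OF carrier carrier] ..
qed

theorem mainTheorem12:
  shows "\<exists>c :: nat \<Rightarrow> nat \<Rightarrow> nat \<Rightarrow> nat \<Rightarrow> ((nat \<Rightarrow> int) \<Rightarrow> int).
    (\<forall>k<4. \<forall>i<4. \<forall>j<4. \<forall>l<4. c k i j l \<in> int_poly_fun 6) \<and>
    (\<forall>(m::int) (n::int) (p::int) (q::int) (s::int) (t::int) (x::nat \<Rightarrow> int) (y::nat \<Rightarrow> int) (z::nat \<Rightarrow> int).
       let prm = (\<lambda>i. [m, n, p, q, s, t] ! i);
           w = (\<lambda>k. trilin (\<lambda>i j l. c k i j l prm) x y z) in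
       Pmat m n p q s t x * Pmat m n p q s t y * Pmat m n p q s t z = Pmat m n p q s t w \<and>
       det (Pmat m n p q s t x) * det (Pmat m n p q s t y) * det (Pmat m n p q s t z)
         = det (Pmat m n p q s t w))"
proof (intro exI conjI allI impI)
  define c :: "nat \<Rightarrow> nat \<Rightarrow> nat \<Rightarrow> nat \<Rightarrow> (nat \<Rightarrow> int) \<Rightarrow> int" where
    "c k i j l v = Pmat_triple (v 0) (v 1) (v 2) (v 3) (v 4) (v 5)
       (\<lambda>a. of_bool (a = i)) (\<lambda>a. of_bool (a = j)) (\<lambda>a. of_bool (a = l)) k" for k i j l v
  show "c k i j l \<in> int_poly_fun 6" if "k < 4" for k i j l
    unfolding c_def using Pmat_triple_coeff_poly[OF that] .
  fix m n p q s t :: int and x y z :: "nat \<Rightarrow> int"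
  let ?w = "\<lambda>k. trilin (\<lambda>i j l. c k i j l (\<lambda>i. [m, n, p, q, s, t] ! i)) x y z"
  have "Pmat m n p q s t ?w = Pmat m n p q s t (Pmat_triple m n p q s t x y z)"
    by (rule Pmat_cong) (simp add: c_def trilin_Pmat_triple_coeffs)
  then show "let prm = \<lambda>i. [m, n, p, q, s, t] ! i; w = \<lambda>k. trilin (\<lambda>i j l. c k i j l prm) x y z in
      Pmat m n p q s t x * Pmat m n p q s t y * Pmat m n p q s t z = Pmat m n p q s t w \<and>
      det (Pmat m n p q s t x) * det (Pmat m n p q s t y) * det (Pmat m n p q s t z) = det (Pmat m n p q s t w)"
    by (simp add: Pmat_triple_product det_Pmat_triple_product)
qed

end
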